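(* Let $G\in\mathcal{C}$ be different from the $4$-cycle, and let $C_1$ and $C_2$ be its two $4$-faces. Then $G$ is $(C_1\cup C_2)$-critical; moreover, a precoloring of $C_1\cup C_2$ in which, for each $i\in\{1,2\}$, the two vertices of $C_i$ of degree two in $G$ receive different colors does not extend to a proper $3$-coloring of $G$.
   Context: $\mathcal{C}$ is the class of plane graphs obtained from a cycle of length $4$ by finitely many repetitions of the following operation: given a graph whose outer face is $v_1v_2v_3v_4$ with $v_1$ and $v_3$ of degree two, add new vertices $v_2',v_3',v_4'$ and edges $v_1v_2', v_2'v_3', v_3'v_4', v_4'v_1, v_3v_3'$, and let $v_1v_2'v_3'v_4'$ be the new outer face. Each graph of $\mathcal{C}$ has two $4$-faces. All colorings are proper $3$-colorings. For a graph $G$ and subgraph $S\subseteq G$, $G$ is $S$-critical if for every proper subgraph $G''\subsetneq G$ with $S\subseteq G''$ there exists a coloring of $S$ that extends to a coloring of $G''$ but not to a coloring of $G$. *)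

theory Defs
  imports Main
begin

text \<open>Graphs are given by a vertex set V and a set E of edges, each edge a
two-element set of vertices. A labelled 4-cycle is a 4-tuple (a,b,c,d).\<close>

definition cyc_verts :: "'a \<times> 'a \<times> 'a \<times> 'a \<Rightarrow> 'a set" where
  "cyc_verts q = (case q of (a,b,c,d) \<Rightarrow> {a,b,c,d})"

definition cyc_edges :: "'a \<times> 'a \<times> 'a \<times> 'a \<Rightarrow> 'a set set" where
  "cyc_edges q = (case q of (a,b,c,d) \<Rightarrow> {{a,b},{b,c},{c,d},{d,a}})"

definition deg :: "'a set set \<Rightarrow> 'a \<Rightarrow> nat" where
  "deg E v = card {e \<in> E. v \<in> e}"

text \<open>The class C, tracking the inner 4-face (first tuple, never changes) and the
labelled outer 4-face (second tuple). The rotation and reversal rules allow any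
labelling of the outer face boundary, as in "a graph whose outer face is v1v2v3v4".\<close>

inductive classC :: "'a set \<Rightarrow> 'a set set \<Rightarrow> 'a \<times> 'a \<times> 'a \<times> 'a
                      \<Rightarrow> 'a \<times> 'a \<times> 'a \<times> 'a \<Rightarrow> bool" where
  base: "distinct [a,b,c,d] \<Longrightarrow>
         classC {a,b,c,d} {{a,b},{b,c},{c,d},{d,a}} (a,b,c,d) (a,b,c,d)"
| rot: "classC V E C (v1,v2,v3,v4) \<Longrightarrow> classC V E C (v2,v3,v4,v1)"
| rev: "classC V E C (v1,v2,v3,v4) \<Longrightarrow> classC V E C (v4,v3,v2,v1)"
| step: "classC V E C (v1,v2,v3,v4) \<Longrightarrow> deg E v1 = 2 \<Longrightarrow> deg E v3 = 2 \<Longrightarrow>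
         distinct [x,y,z] \<Longrightarrow> x \<notin> V \<Longrightarrow> y \<notin> V \<Longrightarrow> z \<notin> V \<Longrightarrow>
         classC (V \<union> {x,y,z}) (E \<union> {{v1,x},{x,y},{y,z},{z,v1},{v3,y}}) C (v1,x,y,z)"

definition is_subgraph :: "'a set \<Rightarrow> 'a set set \<Rightarrow> 'a set \<Rightarrow> 'a set set \<Rightarrow> bool" where
  "is_subgraph V' E' V E \<longleftrightarrow> V' \<subseteq> V \<and> E' \<subseteq> E \<and> (\<forall>e\<in>E'. e \<subseteq> V')"

definition proper3 :: "'a set \<Rightarrow> 'a set set \<Rightarrow> ('a \<Rightarrow> nat) \<Rightarrow> bool" where
  "proper3 V E f \<longleftrightarrow> (\<forall>v\<in>V. f v < 3) \<and>
     (\<forall>u v. {u,v} \<in> E \<longrightarrow> u \<noteq> v \<longrightarrow> f u \<noteq> f v)"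

definition extends_to :: "'a set \<Rightarrow> ('a \<Rightarrow> nat) \<Rightarrow> 'a set \<Rightarrow> 'a set set \<Rightarrow> bool" where
  "extends_to VS f V E \<longleftrightarrow> (\<exists>g. proper3 V E g \<and> (\<forall>v\<in>VS. g v = f v))"

definition critical :: "'a set \<Rightarrow> 'a set set \<Rightarrow> 'a set \<Rightarrow> 'a set set \<Rightarrow> bool" where
  "critical V E VS ES \<longleftrightarrow> is_subgraph VS ES V E \<and>
     (\<forall>V'' E''. is_subgraph V'' E'' V E \<and> VS \<subseteq> V'' \<and> ES \<subseteq> E'' \<and> (V'', E'') \<noteq> (V, E) \<longrightarrow>
        (\<exists>f. proper3 VS ES f \<and> extends_to VS f V'' E'' \<and> \<not> extends_to VS f V E))"

end

theory Submission imports Defs begin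

text \<open>Let D1 and D2 be the pairs of degree-two vertices of the inner and of the outer 4-face;
each is a diagonal of its face. A step attaches the new path x y z to the degree-two
diagonal {v1, v3} of the outer face, and in a 3-colouring in which v1 and v3 agree, x and z
both avoid that colour and the colour of y, hence agree as well. By induction on the
construction, every 3-colouring of G is therefore constant on D1 or on D2, while for every
edge e off the inner face the graph G - e has a 3-colouring that separates both diagonals.
The first fact is the non-extension statement. The second gives criticality: a proper
subgraph containing both faces misses such an edge e, and the colouring of G - e restricted
to the two faces extends to that subgraph but not to G.\<close>

definition cyc_distinct :: "'a \<times> 'a \<times> 'a \<times> 'a \<Rightarrow> bool" where
  "cyc_distinct q = (case q of (a,b,c,d) \<Rightarrow> distinct [a,b,c,d])"

definition diagonals :: "'a \<times> 'a \<times> 'a \<times> 'a \<Rightarrow> 'a set set" where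
  "diagonals q = (case q of (a,b,c,d) \<Rightarrow> {{a,c},{b,d}})"

definition deg2_verts :: "'a set set \<Rightarrow> 'a \<times> 'a \<times> 'a \<times> 'a \<Rightarrow> 'a set" where
  "deg2_verts E q = {u \<in> cyc_verts q. deg E u = 2}"

definition gadget_edges :: "'a \<Rightarrow> 'a \<Rightarrow> 'a \<Rightarrow> 'a \<Rightarrow> 'a \<Rightarrow> 'a set set" where
  "gadget_edges v1 v3 x y z = {{v1,x},{x,y},{y,z},{z,v1},{v3,y}}"

definition monochromatic :: "('a \<Rightarrow> nat) \<Rightarrow> 'a set \<Rightarrow> bool" where
  "monochromatic g D \<longleftrightarrow> (\<forall>u\<in>D. \<forall>v\<in>D. g u = g v)"

definition forces :: "'a set \<Rightarrow> 'a set set \<Rightarrow> 'a set \<Rightarrow> 'a set \<Rightarrow> bool" where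
  "forces V E D D' \<longleftrightarrow> (\<forall>g. proper3 V E g \<longrightarrow> monochromatic g D \<or> monochromatic g D')"

definition essential_edges :: "'a set \<Rightarrow> 'a set set \<Rightarrow> 'a set set \<Rightarrow> 'a set \<Rightarrow> 'a set \<Rightarrow> bool" where
  "essential_edges V E F D D' \<longleftrightarrow>
     (\<forall>e\<in>F. \<exists>g. proper3 V (E - {e}) g \<and> \<not> monochromatic g D \<and> \<not> monochromatic g D')"

lemma cyc_verts_rot: "cyc_verts (b,c,d,a) = cyc_verts (a,b,c,d)"
  and cyc_verts_rev: "cyc_verts (d,c,b,a) = cyc_verts (a,b,c,d)"
  and cyc_edges_rot: "cyc_edges (b,c,d,a) = cyc_edges (a,b,c,d)"
  and cyc_edges_rev: "cyc_edges (d,c,b,a) = cyc_edges (a,b,c,d)"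
  and diagonals_rot: "diagonals (b,c,d,a) = diagonals (a,b,c,d)"
  and diagonals_rev: "diagonals (d,c,b,a) = diagonals (a,b,c,d)"
  and cyc_distinct_rot: "cyc_distinct (b,c,d,a) = cyc_distinct (a,b,c,d)"
  and cyc_distinct_rev: "cyc_distinct (d,c,b,a) = cyc_distinct (a,b,c,d)"
  by (auto simp: cyc_verts_def cyc_edges_def diagonals_def cyc_distinct_def insert_commute)

lemma diagonal_subset_cyc_verts: "D \<in> diagonals q \<Longrightarrow> D \<subseteq> cyc_verts q"
  by (cases q) (auto simp: diagonals_def cyc_verts_def)

lemma diagonal_doubleton: "D \<in> diagonals q \<Longrightarrow> cyc_distinct q \<Longrightarrow> \<exists>p r. D = {p,r} \<and> p \<noteq> r"
  by (cases q) (auto simp: diagonals_def cyc_distinct_def)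

lemma cyc_edge_subset: "e \<in> cyc_edges q \<Longrightarrow> e \<subseteq> cyc_verts q"
  by (cases q) (auto simp: cyc_edges_def cyc_verts_def)

lemma cyc_verts_subset: "cyc_edges q \<subseteq> E \<Longrightarrow> \<forall>e\<in>E. e \<subseteq> V \<Longrightarrow> cyc_verts q \<subseteq> V"
  by (cases q) (auto simp: cyc_edges_def cyc_verts_def)

lemma monochromatic_doubleton [simp]: "monochromatic g {p,r} \<longleftrightarrow> g p = g r"
  unfolding monochromatic_def by auto

lemma monochromatic_cong: "D \<subseteq> V \<Longrightarrow> \<forall>v\<in>V. h v = g v \<Longrightarrow> monochromatic h D = monochromatic g D"
  unfolding monochromatic_def by (metis subsetD)

lemma proper3_mono: "V \<subseteq> V' \<Longrightarrow> E \<subseteq> E' \<Longrightarrow> proper3 V' E' g \<Longrightarrow> proper3 V E g"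
  unfolding proper3_def by blast

lemma proper3_Un:
  assumes "proper3 V E g" "\<forall>e\<in>E. e \<subseteq> V" "\<forall>v\<in>V. h v = g v" "proper3 W F h"
  shows "proper3 (V \<union> W) (E \<union> F) h"
proof -
  have "h u \<noteq> h v" if "{u,v} \<in> E" "u \<noteq> v" for u v
    using that assms(1-3) unfolding proper3_def by auto
  then show ?thesis using assms(1,3,4) unfolding proper3_def by auto
qed

lemma colour_forced:
  "(a::nat) < 3 \<Longrightarrow> b < 3 \<Longrightarrow> c < 3 \<Longrightarrow> d < 3 \<Longrightarrow> a \<noteq> b \<Longrightarrow>
   c \<noteq> a \<Longrightarrow> c \<noteq> b \<Longrightarrow> d \<noteq> a \<Longrightarrow> d \<noteq> b \<Longrightarrow> c = d"
  by arith

lemma other_two_colours: "(a::nat) < 3 \<Longrightarrow> \<exists>b c. b < 3 \<and> c < 3 \<and> a \<noteq> b \<and> a \<noteq> c \<and> b \<noteq> c"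
  by (rule exI[of _ "(a+1) mod 3"], rule exI[of _ "(a+2) mod 3"]) presburger

lemma deg_Un_untouched: "\<forall>e\<in>N. u \<notin> e \<Longrightarrow> deg (E \<union> N) u = deg E u"
  unfolding deg_def by (metis (no_types, lifting) UnE UnI1)

lemma deg_eq_2: "{e \<in> E. u \<in> e} = {p,q} \<Longrightarrow> p \<noteq> q \<Longrightarrow> deg E u = 2"
  unfolding deg_def by simp

lemma deg_ne_2:
  assumes "{p,q,r} \<subseteq> {e \<in> E. u \<in> e}" "distinct [p,q,r]"
  shows "deg E u \<noteq> 2"
proof (cases "finite {e \<in> E. u \<in> e}")
  case True
  then have "card {p,q,r} \<le> deg E u" unfolding deg_def using assms(1) by (rule card_mono)
  then show ?thesis using assms(2) by simp
qed (simp add: deg_def)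

lemma proper3_gadget:
  assumes "h v1 < 3" "h v3 < 3" "h x < 3" "h y < 3" "h z < 3"
    and "{v1,x} \<notin> R \<Longrightarrow> h v1 \<noteq> h x" "{x,y} \<notin> R \<Longrightarrow> h x \<noteq> h y"
      "{y,z} \<notin> R \<Longrightarrow> h y \<noteq> h z" "{z,v1} \<notin> R \<Longrightarrow> h z \<noteq> h v1"
      "{v3,y} \<notin> R \<Longrightarrow> h v3 \<noteq> h y"
  shows "proper3 {v1,v3,x,y,z} (gadget_edges v1 v3 x y z - R) h"
  unfolding proper3_def
proof (intro conjI allI impI)
  fix u w assume "{u,w} \<in> gadget_edges v1 v3 x y z - R"
  then consider "{u,w} = {v1,x}" "{v1,x} \<notin> R" | "{u,w} = {x,y}" "{x,y} \<notin> R"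
    | "{u,w} = {y,z}" "{y,z} \<notin> R" | "{u,w} = {z,v1}" "{z,v1} \<notin> R"
    | "{u,w} = {v3,y}" "{v3,y} \<notin> R"
    unfolding gadget_edges_def by (elim DiffE insertE emptyE) metis+
  then show "h u \<noteq> h w" by cases (use assms(6-10) in \<open>auto simp: doubleton_eq_iff\<close>)
qed (use assms(1-5) in auto)

lemma gadget_colouring:
  assumes "\<forall>e\<in>E. e \<subseteq> V" "v1 \<in> V" "v3 \<in> V" "x \<notin> V" "y \<notin> V" "z \<notin> V" "distinct [x,y,z]"
    and "proper3 V E g" "a < 3" "b < 3" "c < 3"
    and "{v1,x} \<notin> R \<Longrightarrow> g v1 \<noteq> a" "{x,y} \<notin> R \<Longrightarrow> a \<noteq> b" "{y,z} \<notin> R \<Longrightarrow> b \<noteq> c"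
      "{z,v1} \<notin> R \<Longrightarrow> c \<noteq> g v1" "{v3,y} \<notin> R \<Longrightarrow> g v3 \<noteq> b"
  shows "proper3 (V \<union> {x,y,z}) (E \<union> (gadget_edges v1 v3 x y z - R)) (g(x:=a, y:=b, z:=c))"
proof -
  let ?h = "g(x:=a, y:=b, z:=c)"
  have agree: "\<forall>v\<in>V. ?h v = g v" using assms(4-6) by auto
  have "v1 \<notin> {x,y,z}" "v3 \<notin> {x,y,z}" using assms(2-6) by auto
  moreover have "g v1 < 3" "g v3 < 3" using assms(2,3,8) unfolding proper3_def by auto
  ultimately have "proper3 {v1,v3,x,y,z} (gadget_edges v1 v3 x y z - R) ?h"
    using assms(7,9-16) by (intro proper3_gadget) auto
  then have "proper3 (V \<union> {v1,v3,x,y,z}) (E \<union> (gadget_edges v1 v3 x y z - R)) ?h"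
    using proper3_Un[OF assms(8,1) agree] by blast
  moreover have "V \<union> {v1,v3,x,y,z} = V \<union> {x,y,z}" using assms(2,3) by auto
  ultimately show ?thesis by simp
qed

lemma forces_gadget:
  assumes "forces V E D {v1,v3}" "v1 \<in> V" "v3 \<in> V" "x \<notin> V" "y \<notin> V" "z \<notin> V" "distinct [x,y,z]"
  shows "forces (V \<union> {x,y,z}) (E \<union> gadget_edges v1 v3 x y z) D {x,z}"
  unfolding forces_def
proof (intro allI impI)
  fix g assume g: "proper3 (V \<union> {x,y,z}) (E \<union> gadget_edges v1 v3 x y z) g"
  then have "proper3 V E g" by (rule proper3_mono[rotated 2]) auto
  then have "monochromatic g D \<or> g v1 = g v3" using assms(1) unfolding forces_def by simp
  moreover have "g x = g z" if "g v1 = g v3"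
  proof -
    have edge: "g u \<noteq> g w" if "{u,w} \<in> gadget_edges v1 v3 x y z" "u \<noteq> w" for u w
      using g that unfolding proper3_def by blast
    have "g v1 \<noteq> g x" "g x \<noteq> g y" "g y \<noteq> g z" "g z \<noteq> g v1" "g v3 \<noteq> g y"
      by (rule edge; use assms(2-7) in \<open>auto simp: gadget_edges_def\<close>)+
    moreover have "g v1 < 3" "g x < 3" "g y < 3" "g z < 3" using g assms(2) unfolding proper3_def by auto
    ultimately show ?thesis using that by (intro colour_forced[of "g v1" "g y"]) auto
  qed
  ultimately show "monochromatic g D \<or> monochromatic g {x,z}" by auto
qed

lemma gadget_extension_split:
  assumes "\<forall>e\<in>E. e \<subseteq> V" "v1 \<in> V" "v3 \<in> V" "x \<notin> V" "y \<notin> V" "z \<notin> V" "distinct [x,y,z]"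
    and "proper3 V E g" "g v1 \<noteq> g v3"
  shows "\<exists>h. proper3 (V \<union> {x,y,z}) (E \<union> gadget_edges v1 v3 x y z) h \<and> (\<forall>v\<in>V. h v = g v) \<and> h x \<noteq> h z"
proof -
  have "g v1 < 3" using assms(2,8) unfolding proper3_def by auto
  then obtain b c where bc: "b < 3" "c < 3" "g v1 \<noteq> b" "g v1 \<noteq> c" "b \<noteq> c"
    using other_two_colours by blast
  have "proper3 (V \<union> {x,y,z}) (E \<union> (gadget_edges v1 v3 x y z - {})) (g(x:=b, y:=g v1, z:=c))"
    using bc assms(9) \<open>g v1 < 3\<close> by (intro gadget_colouring[OF assms(1-8)]) auto
  then show ?thesis using assms(4-7) bc by (intro exI[of _ "g(x:=b, y:=g v1, z:=c)"]) auto
qed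

lemma gadget_extension:
  assumes "\<forall>e\<in>E. e \<subseteq> V" "v1 \<in> V" "v3 \<in> V" "x \<notin> V" "y \<notin> V" "z \<notin> V" "distinct [x,y,z]"
    and "proper3 V E g"
  shows "\<exists>h. proper3 (V \<union> {x,y,z}) (E \<union> gadget_edges v1 v3 x y z) h \<and> (\<forall>v\<in>V. h v = g v)"
proof (cases "g v1 = g v3")
  case True
  have "g v1 < 3" using assms(2,8) unfolding proper3_def by auto
  then obtain b c where bc: "b < 3" "c < 3" "g v1 \<noteq> b" "g v1 \<noteq> c" "b \<noteq> c"
    using other_two_colours by blast
  have "proper3 (V \<union> {x,y,z}) (E \<union> (gadget_edges v1 v3 x y z - {})) (g(x:=b, y:=c, z:=b))"
    using bc True by (intro gadget_colouring[OF assms]) auto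
  then show ?thesis using assms(4-6) by (intro exI[of _ "g(x:=b, y:=c, z:=b)"]) auto
next
  case False
  then show ?thesis using gadget_extension_split[OF assms] by blast
qed

lemma gadget_extension_delete:
  assumes "\<forall>e\<in>E. e \<subseteq> V" "v1 \<in> V" "v3 \<in> V" "x \<notin> V" "y \<notin> V" "z \<notin> V" "distinct [x,y,z]"
    and "proper3 V E g" "e \<in> gadget_edges v1 v3 x y z"
  shows "\<exists>h. proper3 (V \<union> {x,y,z}) (E \<union> (gadget_edges v1 v3 x y z - {e})) h
    \<and> (\<forall>v\<in>V. h v = g v) \<and> h x \<noteq> h z"
proof (cases "g v1 = g v3")
  case True
  have "g v1 < 3" using assms(2,8) unfolding proper3_def by auto
  then obtain b c where bc: "b < 3" "c < 3" "g v1 \<noteq> b" "g v1 \<noteq> c" "b \<noteq> c"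
    using other_two_colours by blast
  have ne: "v1 \<noteq> x" "v1 \<noteq> y" "v1 \<noteq> z" "v3 \<noteq> x" "v3 \<noteq> y" "v3 \<noteq> z"
    using assms(2-6) by auto
  have colouring: "\<exists>h. proper3 (V \<union> {x,y,z}) (E \<union> (gadget_edges v1 v3 x y z - {e})) h
      \<and> (\<forall>v\<in>V. h v = g v) \<and> h x \<noteq> h z"
    if "a < 3" "b' < 3" "c' < 3" "a \<noteq> c'"
      "{v1,x} \<noteq> e \<Longrightarrow> g v1 \<noteq> a" "{x,y} \<noteq> e \<Longrightarrow> a \<noteq> b'" "{y,z} \<noteq> e \<Longrightarrow> b' \<noteq> c'"
      "{z,v1} \<noteq> e \<Longrightarrow> c' \<noteq> g v1" "{v3,y} \<noteq> e \<Longrightarrow> g v3 \<noteq> b'" for a b' c'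
    using gadget_colouring[OF assms(1-8) that(1-3), of "{e}"] that(4-9) assms(4-7)
    by (intro exI[of _ "g(x:=a, y:=b', z:=c')"]) auto
  from assms(9) consider "e = {v1,x}" | "e = {x,y}" | "e = {y,z}" | "e = {z,v1}" | "e = {v3,y}"
    unfolding gadget_edges_def by blast
  then show ?thesis
  proof cases
    case 1 then show ?thesis using bc True ne assms(7) \<open>g v1 < 3\<close>
      by (intro colouring[of "g v1" b c]) (auto simp: doubleton_eq_iff)
  next
    case 2 then show ?thesis using bc True ne assms(7) \<open>g v1 < 3\<close>
      by (intro colouring[of b b c]) (auto simp: doubleton_eq_iff)
  next
    case 3 then show ?thesis using bc True ne assms(7) \<open>g v1 < 3\<close>
      by (intro colouring[of c b b]) (auto simp: doubleton_eq_iff)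
  next
    case 4 then show ?thesis using bc True ne assms(7) \<open>g v1 < 3\<close>
      by (intro colouring[of c b "g v1"]) (auto simp: doubleton_eq_iff)
  next
    case 5 then show ?thesis using bc True ne assms(7) \<open>g v1 < 3\<close>
      by (intro colouring[of b "g v1" c]) (auto simp: doubleton_eq_iff)
  qed
next
  case False
  then obtain h where "proper3 (V \<union> {x,y,z}) (E \<union> gadget_edges v1 v3 x y z) h"
    "\<forall>v\<in>V. h v = g v" "h x \<noteq> h z"
    using gadget_extension_split[OF assms(1-8)] by blast
  then show ?thesis by (blast intro: proper3_mono[rotated 2])
qed

lemma deg_cyc_edges: "cyc_distinct q \<Longrightarrow> w \<in> cyc_verts q \<Longrightarrow> deg (cyc_edges q) w = 2"
proof (cases q)
  case (fields a b c d)
  assume "cyc_distinct q" "w \<in> cyc_verts q"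
  then have abcd: "distinct [a,b,c,d]" and "w \<in> {a,b,c,d}"
    using fields by (auto simp: cyc_distinct_def cyc_verts_def)
  then consider "w = a" | "w = b" | "w = c" | "w = d" by blast
  then show ?thesis
  proof cases
    case 1 show ?thesis
      by (rule deg_eq_2[of _ _ "{a,b}" "{d,a}"]) (use abcd fields 1 in \<open>auto simp: cyc_edges_def\<close>)
  next
    case 2 show ?thesis
      by (rule deg_eq_2[of _ _ "{a,b}" "{b,c}"]) (use abcd fields 2 in \<open>auto simp: cyc_edges_def\<close>)
  next
    case 3 show ?thesis
      by (rule deg_eq_2[of _ _ "{b,c}" "{c,d}"]) (use abcd fields 3 in \<open>auto simp: cyc_edges_def\<close>)
  next
    case 4 show ?thesis
      by (rule deg_eq_2[of _ _ "{c,d}" "{d,a}"]) (use abcd fields 4 in \<open>auto simp: cyc_edges_def\<close>)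
  qed
qed

lemma deg_gadget:
  assumes "\<forall>e\<in>E. e \<subseteq> V" "cyc_distinct (v1,v2,v3,v4)" "cyc_edges (v1,v2,v3,v4) \<subseteq> E"
    and "x \<notin> V" "y \<notin> V" "z \<notin> V" "distinct [x,y,z]"
  shows "w \<in> V \<Longrightarrow> deg (E \<union> gadget_edges v1 v3 x y z) w = 2 \<longleftrightarrow> deg E w = 2 \<and> w \<notin> {v1,v3}"
    and "deg (E \<union> gadget_edges v1 v3 x y z) x = 2" "deg (E \<union> gadget_edges v1 v3 x y z) y \<noteq> 2"
    and "deg (E \<union> gadget_edges v1 v3 x y z) z = 2"
proof -
  let ?N = "gadget_edges v1 v3 x y z"
  have Q: "{v1,v2} \<in> E" "{v2,v3} \<in> E" "{v3,v4} \<in> E" "{v4,v1} \<in> E" "distinct [v1,v2,v3,v4]"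
    using assms(2,3) by (auto simp: cyc_edges_def cyc_distinct_def)
  then have V: "v1 \<in> V" "v2 \<in> V" "v3 \<in> V" "v4 \<in> V" using assms(1) by auto
  have ne: "v1 \<noteq> x" "v1 \<noteq> y" "v1 \<noteq> z" "v3 \<noteq> x" "v3 \<noteq> y" "v3 \<noteq> z"
    using V assms(4-6) by auto
  have fresh_edges: "\<And>u. u \<notin> V \<Longrightarrow> {e \<in> E \<union> ?N. u \<in> e} = {e \<in> ?N. u \<in> e}" using assms(1) by auto
  have "deg (E \<union> ?N) v1 \<noteq> 2"
    by (rule deg_ne_2[of "{v1,v2}" "{v4,v1}" "{v1,x}"])
      (use Q V ne assms(4-6) in \<open>auto simp: gadget_edges_def doubleton_eq_iff\<close>)
  moreover have "deg (E \<union> ?N) v3 \<noteq> 2"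
    by (rule deg_ne_2[of "{v2,v3}" "{v3,v4}" "{v3,y}"])
      (use Q V ne assms(4-6) in \<open>auto simp: gadget_edges_def doubleton_eq_iff\<close>)
  moreover have "deg (E \<union> ?N) w = deg E w" if "w \<in> V" "w \<notin> {v1,v3}" for w
    using that assms(4-6) by (intro deg_Un_untouched) (auto simp: gadget_edges_def)
  ultimately show "w \<in> V \<Longrightarrow> deg (E \<union> ?N) w = 2 \<longleftrightarrow> deg E w = 2 \<and> w \<notin> {v1,v3}"
    by (cases "w = v1 \<or> w = v3") auto
  show "deg (E \<union> ?N) y \<noteq> 2"
    by (rule deg_ne_2[of "{x,y}" "{y,z}" "{v3,y}"])
      (use assms(7) ne in \<open>auto simp: gadget_edges_def doubleton_eq_iff\<close>)
  show "deg (E \<union> ?N) x = 2"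
    by (rule deg_eq_2[of _ _ "{v1,x}" "{x,y}"])
      (use assms(4,7) ne fresh_edges in \<open>auto simp: gadget_edges_def doubleton_eq_iff\<close>)
  show "deg (E \<union> ?N) z = 2"
    by (rule deg_eq_2[of _ _ "{y,z}" "{z,v1}"])
      (use assms(6,7) ne fresh_edges in \<open>auto simp: gadget_edges_def doubleton_eq_iff\<close>)
qed

lemma deg2_verts_gadget:
  assumes "\<forall>e\<in>E. e \<subseteq> V" "cyc_distinct (v1,v2,v3,v4)" "cyc_edges (v1,v2,v3,v4) \<subseteq> E"
    and "x \<notin> V" "y \<notin> V" "z \<notin> V" "distinct [x,y,z]"
  shows "cyc_verts q \<subseteq> V \<Longrightarrow>
      deg2_verts (E \<union> gadget_edges v1 v3 x y z) q = deg2_verts E q - {v1,v3}"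
    and "deg2_verts (E \<union> gadget_edges v1 v3 x y z) (v1,x,y,z) = {x,z}"
proof -
  note deg = deg_gadget[OF assms]
  show "cyc_verts q \<subseteq> V \<Longrightarrow> deg2_verts (E \<union> gadget_edges v1 v3 x y z) q = deg2_verts E q - {v1,v3}"
    using deg(1) unfolding deg2_verts_def by auto
  have "v1 \<in> V" using assms(1,3) by (auto simp: cyc_edges_def)
  then show "deg2_verts (E \<union> gadget_edges v1 v3 x y z) (v1,x,y,z) = {x,z}"
    using deg(1)[of v1] deg(2-4) unfolding deg2_verts_def cyc_verts_def by auto
qed

lemma essential_edges_gadget:
  assumes "\<forall>e\<in>E. e \<subseteq> V" "v1 \<in> V" "v3 \<in> V" "x \<notin> V" "y \<notin> V" "z \<notin> V" "distinct [x,y,z]"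
    and "D \<subseteq> V" "essential_edges V E F D {v1,v3}" "proper3 V E g" "\<not> monochromatic g D"
  shows "essential_edges (V \<union> {x,y,z}) (E \<union> gadget_edges v1 v3 x y z)
    (F \<union> gadget_edges v1 v3 x y z) D {x,z}"
  unfolding essential_edges_def
proof
  let ?N = "gadget_edges v1 v3 x y z"
  fix e assume "e \<in> F \<union> ?N"
  then obtain h where h: "proper3 (V \<union> {x,y,z}) ((E - {e}) \<union> ?N) h \<or>
      proper3 (V \<union> {x,y,z}) (E \<union> (?N - {e})) h"
    "\<not> monochromatic h D" "h x \<noteq> h z"
  proof
    assume "e \<in> F"
    then obtain g' where "proper3 V (E - {e}) g'" "\<not> monochromatic g' D" "g' v1 \<noteq> g' v3"
      using assms(9) unfolding essential_edges_def by auto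
    moreover from this obtain h where "proper3 (V \<union> {x,y,z}) ((E - {e}) \<union> ?N) h"
      "\<forall>v\<in>V. h v = g' v" "h x \<noteq> h z"
      using gadget_extension_split[of "E - {e}" V v1 v3 x y z g'] assms(1-7) by blast
    ultimately show thesis using that monochromatic_cong[OF assms(8), of h g'] by auto
  next
    assume "e \<in> ?N"
    then obtain h where "proper3 (V \<union> {x,y,z}) (E \<union> (?N - {e})) h"
      "\<forall>v\<in>V. h v = g v" "h x \<noteq> h z"
      using gadget_extension_delete[OF assms(1-7,10)] by blast
    then show thesis using that assms(11) monochromatic_cong[OF assms(8), of h g] by auto
  qed
  then have "proper3 (V \<union> {x,y,z}) (E \<union> ?N - {e}) h" by (blast intro: proper3_mono[rotated 2])
  then show "\<exists>h. proper3 (V \<union> {x,y,z}) (E \<union> ?N - {e}) h \<and> \<not> monochromatic h D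
      \<and> \<not> monochromatic h {x,z}"
    using h(2,3) by auto
qed

lemma forces_four_cycle:
  assumes "cyc_distinct (a,b,c,d)"
  shows "forces (cyc_verts (a,b,c,d)) (cyc_edges (a,b,c,d)) {b,d} {a,c}"
  unfolding forces_def
proof (intro allI impI)
  fix g assume g: "proper3 (cyc_verts (a,b,c,d)) (cyc_edges (a,b,c,d)) g"
  have edge: "g u \<noteq> g w" if "{u,w} \<in> cyc_edges (a,b,c,d)" "u \<noteq> w" for u w
    using g that unfolding proper3_def by blast
  have "g a \<noteq> g b" "g b \<noteq> g c" "g c \<noteq> g d" "g d \<noteq> g a"
    by (rule edge; use assms in \<open>auto simp: cyc_edges_def cyc_distinct_def\<close>)+
  moreover have "g a < 3" "g b < 3" "g c < 3" "g d < 3"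
    using g unfolding proper3_def cyc_verts_def by auto
  ultimately have "g a \<noteq> g c \<Longrightarrow> g b = g d" by (intro colour_forced[of "g a" "g c"]) auto
  then show "monochromatic g {b,d} \<or> monochromatic g {a,c}" by auto
qed

lemma four_cycle_colouring:
  assumes "cyc_distinct (a,b,c,d)"
  shows "\<exists>g. proper3 (cyc_verts (a,b,c,d)) (cyc_edges (a,b,c,d)) g \<and> \<not> monochromatic g {b,d}"
proof (intro exI conjI)
  let ?g = "\<lambda>w. if w = b then 1 else if w = d then 2 else 0 :: nat"
  show "\<not> monochromatic ?g {b,d}" using assms by (auto simp: cyc_distinct_def)
  show "proper3 (cyc_verts (a,b,c,d)) (cyc_edges (a,b,c,d)) ?g"
    using assms unfolding proper3_def cyc_edges_def cyc_distinct_def by (auto simp: doubleton_eq_iff)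
qed

text \<open>In the initial 4-cycle all four vertices have degree two, so the inner diagonal D1 is
singled out only by the first step; this case is tracked by a separate invariant.\<close>

definition four_cycle_labelling :: "'a set \<Rightarrow> 'a set set \<Rightarrow> 'a \<times> 'a \<times> 'a \<times> 'a \<Rightarrow> 'a \<times> 'a \<times> 'a \<times> 'a \<Rightarrow> bool" where
  "four_cycle_labelling V E C Q \<longleftrightarrow> V = cyc_verts C \<and> E = cyc_edges C \<and> cyc_distinct C \<and>
     cyc_distinct Q \<and> cyc_verts Q = cyc_verts C \<and> cyc_edges Q = cyc_edges C \<and> diagonals Q = diagonals C"

definition forcing_inv :: "'a set \<Rightarrow> 'a set set \<Rightarrow> 'a \<times> 'a \<times> 'a \<times> 'a \<Rightarrow> 'a \<times> 'a \<times> 'a \<times> 'a \<Rightarrow> bool" where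
  "forcing_inv V E C Q \<longleftrightarrow> (\<forall>e\<in>E. e \<subseteq> V) \<and> (\<forall>v\<in>V. \<exists>e\<in>E. v \<in> e) \<and>
     cyc_distinct C \<and> cyc_distinct Q \<and> cyc_edges C \<subseteq> E \<and> cyc_edges Q \<subseteq> E \<and>
     deg2_verts E C \<in> diagonals C \<and> deg2_verts E Q \<in> diagonals Q \<and>
     deg2_verts E Q \<inter> cyc_verts C = {} \<and>
     forces V E (deg2_verts E C) (deg2_verts E Q) \<and>
     (\<exists>g. proper3 V E g \<and> \<not> monochromatic g (deg2_verts E C)) \<and>
     essential_edges V E (E - cyc_edges C) (deg2_verts E C) (deg2_verts E Q)"

lemma deg2_verts_rot: "deg2_verts E (b,c,d,a) = deg2_verts E (a,b,c,d)"
  and deg2_verts_rev: "deg2_verts E (d,c,b,a) = deg2_verts E (a,b,c,d)"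
  by (auto simp: deg2_verts_def cyc_verts_def)

lemma four_cycle_labelling_rot:
    "four_cycle_labelling V E C (a,b,c,d) \<Longrightarrow> four_cycle_labelling V E C (b,c,d,a)"
  and four_cycle_labelling_rev:
    "four_cycle_labelling V E C (a,b,c,d) \<Longrightarrow> four_cycle_labelling V E C (d,c,b,a)"
  and forcing_inv_rot: "forcing_inv V E C (a,b,c,d) \<Longrightarrow> forcing_inv V E C (b,c,d,a)"
  and forcing_inv_rev: "forcing_inv V E C (a,b,c,d) \<Longrightarrow> forcing_inv V E C (d,c,b,a)"
  unfolding four_cycle_labelling_def forcing_inv_def
    cyc_verts_rot[of b c d a] cyc_edges_rot[of b c d a] diagonals_rot[of b c d a]
    cyc_distinct_rot[of b c d a] deg2_verts_rot[of E b c d a]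
    cyc_verts_rev[of d c b a] cyc_edges_rev[of d c b a] diagonals_rev[of d c b a]
    cyc_distinct_rev[of d c b a] deg2_verts_rev[of E d c b a]
  by (auto simp only:)

lemma essential_edges_subset:
  "essential_edges V E F D D' \<Longrightarrow> F' \<subseteq> F \<Longrightarrow> essential_edges V E F' D D'"
  unfolding essential_edges_def by blast

lemma forcing_inv_step:
  assumes sub: "\<forall>e\<in>E. e \<subseteq> V" and cov: "\<forall>v\<in>V. \<exists>e\<in>E. v \<in> e"
    and C: "cyc_distinct C" "cyc_edges C \<subseteq> E"
    and Q: "cyc_distinct (v1,v2,v3,v4)" "cyc_edges (v1,v2,v3,v4) \<subseteq> E"
    and fresh: "x \<notin> V" "y \<notin> V" "z \<notin> V" "distinct [x,y,z]"
    and D: "deg2_verts E C - {v1,v3} \<in> diagonals C"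
    and forces: "forces V E (deg2_verts E C - {v1,v3}) {v1,v3}"
    and colouring: "proper3 V E g" "\<not> monochromatic g (deg2_verts E C - {v1,v3})"
    and ess: "essential_edges V E (E - cyc_edges C) (deg2_verts E C - {v1,v3}) {v1,v3}"
  shows "forcing_inv (V \<union> {x,y,z}) (E \<union> gadget_edges v1 v3 x y z) C (v1,x,y,z)"
proof -
  let ?N = "gadget_edges v1 v3 x y z" and ?D = "deg2_verts E C - {v1,v3}"
  have v: "v1 \<in> V" "v3 \<in> V" using sub Q(2) by (auto simp: cyc_edges_def)
  have CV: "cyc_verts C \<subseteq> V" using cyc_verts_subset[OF C(2) sub] .
  have D_sub: "?D \<subseteq> V" using diagonal_subset_cyc_verts[OF D] CV by blast
  obtain h where h: "proper3 (V \<union> {x,y,z}) (E \<union> ?N) h" "\<forall>v\<in>V. h v = g v"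
    using gadget_extension[OF sub v fresh colouring(1)] by blast
  have "\<not> monochromatic h ?D" using colouring(2) monochromatic_cong[OF D_sub h(2)] by simp
  moreover have "essential_edges (V \<union> {x,y,z}) (E \<union> ?N) (E \<union> ?N - cyc_edges C) ?D {x,z}"
    by (rule essential_edges_subset[OF essential_edges_gadget[OF sub v fresh D_sub ess colouring]])
      blast
  moreover have "forces (V \<union> {x,y,z}) (E \<union> ?N) ?D {x,z}"
    by (rule forces_gadget[OF forces v fresh])
  moreover have "\<forall>e\<in>E \<union> ?N. e \<subseteq> V \<union> {x,y,z}"
    using sub v by (auto simp: gadget_edges_def)
  moreover have "\<forall>w\<in>V \<union> {x,y,z}. \<exists>e\<in>E \<union> ?N. w \<in> e"
  proof
    fix w assume "w \<in> V \<union> {x,y,z}"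
    moreover have "{v1,x} \<in> ?N" "{y,z} \<in> ?N" by (simp_all add: gadget_edges_def)
    ultimately show "\<exists>e\<in>E \<union> ?N. w \<in> e" using cov by blast
  qed
  moreover have "cyc_distinct (v1,x,y,z)" using v fresh by (auto simp: cyc_distinct_def)
  moreover have "cyc_edges (v1,x,y,z) \<subseteq> E \<union> ?N" by (auto simp: cyc_edges_def gadget_edges_def)
  moreover have "{x,z} \<in> diagonals (v1,x,y,z)" by (simp add: diagonals_def)
  moreover have "{x,z} \<inter> cyc_verts C = {}" using CV fresh by blast
  ultimately show ?thesis
    unfolding forcing_inv_def deg2_verts_gadget(1)[OF sub Q fresh CV] deg2_verts_gadget(2)[OF sub Q fresh]
    using C D h(1) by blast
qed

lemma forcing_inv_from_four_cycle:
  assumes "four_cycle_labelling V E C (v1,v2,v3,v4)"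
    and fresh: "x \<notin> V" "y \<notin> V" "z \<notin> V" "distinct [x,y,z]"
  shows "forcing_inv (V \<union> {x,y,z}) (E \<union> gadget_edges v1 v3 x y z) C (v1,x,y,z)"
proof -
  let ?Q = "(v1,v2,v3,v4)"
  have VE: "V = cyc_verts ?Q" "E = cyc_edges ?Q" and Q: "cyc_distinct ?Q"
    and C: "cyc_distinct C" "cyc_edges C = E" "cyc_verts C = V" "diagonals C = diagonals ?Q"
    using assms(1) unfolding four_cycle_labelling_def by auto
  have "deg2_verts E C = V" unfolding deg2_verts_def using deg_cyc_edges[OF Q] VE C(3) by auto
  then have D: "deg2_verts E C - {v1,v3} = {v2,v4}"
    using Q VE(1) by (auto simp: cyc_distinct_def cyc_verts_def)
  have sub: "\<forall>e\<in>E. e \<subseteq> V" and cov: "\<forall>v\<in>V. \<exists>e\<in>E. v \<in> e"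
    and QE: "cyc_edges ?Q \<subseteq> E"
    using VE by (auto simp: cyc_edges_def cyc_verts_def)
  have CE: "cyc_edges C \<subseteq> E" using C(2) by simp
  have diag: "deg2_verts E C - {v1,v3} \<in> diagonals C" using C(4) D by (simp add: diagonals_def)
  have forces: "forces V E (deg2_verts E C - {v1,v3}) {v1,v3}"
    using forces_four_cycle[OF Q] VE D by simp
  obtain g where g: "proper3 V E g" "\<not> monochromatic g (deg2_verts E C - {v1,v3})"
    using four_cycle_colouring[OF Q] unfolding VE[symmetric] D by blast
  have "E - cyc_edges C = {}" using C(2) by blast
  then have ess: "essential_edges V E (E - cyc_edges C) (deg2_verts E C - {v1,v3}) {v1,v3}"
    unfolding essential_edges_def by blast
  show ?thesis by (rule forcing_inv_step[OF sub cov C(1) CE Q QE fresh diag forces g ess])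
qed

lemma forcing_inv_grow:
  assumes I: "forcing_inv V E C (v1,v2,v3,v4)" and "deg E v1 = 2"
    and fresh: "x \<notin> V" "y \<notin> V" "z \<notin> V" "distinct [x,y,z]"
  shows "forcing_inv (V \<union> {x,y,z}) (E \<union> gadget_edges v1 v3 x y z) C (v1,x,y,z)"
proof -
  let ?Q = "(v1,v2,v3,v4)"
  from I have sub: "\<forall>e\<in>E. e \<subseteq> V" and cov: "\<forall>v\<in>V. \<exists>e\<in>E. v \<in> e"
    and C: "cyc_distinct C" "cyc_edges C \<subseteq> E" and Q: "cyc_distinct ?Q" "cyc_edges ?Q \<subseteq> E"
    and D1: "deg2_verts E C \<in> diagonals C" and D2: "deg2_verts E ?Q \<in> diagonals ?Q"
    and disj: "deg2_verts E ?Q \<inter> cyc_verts C = {}"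
    and forces: "forces V E (deg2_verts E C) (deg2_verts E ?Q)"
    and colouring: "\<exists>g. proper3 V E g \<and> \<not> monochromatic g (deg2_verts E C)"
    and ess: "essential_edges V E (E - cyc_edges C) (deg2_verts E C) (deg2_verts E ?Q)"
    unfolding forcing_inv_def by blast+
  have "v1 \<in> deg2_verts E ?Q" using assms(2) by (simp add: deg2_verts_def cyc_verts_def)
  then have D2_eq: "deg2_verts E ?Q = {v1,v3}"
    using D2 Q(1) by (auto simp: diagonals_def cyc_distinct_def)
  have "deg2_verts E C \<subseteq> cyc_verts C" by (simp add: deg2_verts_def)
  then have D1_eq: "deg2_verts E C - {v1,v3} = deg2_verts E C" using disj D2_eq by blast
  obtain g where "proper3 V E g" "\<not> monochromatic g (deg2_verts E C - {v1,v3})"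
    using colouring unfolding D1_eq by blast
  moreover have "deg2_verts E C - {v1,v3} \<in> diagonals C" using D1 unfolding D1_eq .
  moreover have "forces V E (deg2_verts E C - {v1,v3}) {v1,v3}" using forces unfolding D1_eq D2_eq .
  moreover have "essential_edges V E (E - cyc_edges C) (deg2_verts E C - {v1,v3}) {v1,v3}"
    using ess unfolding D1_eq D2_eq .
  ultimately show ?thesis using forcing_inv_step[OF sub cov C Q fresh] by blast
qed

lemma classC_invariant:
  "classC V E C Q \<Longrightarrow> four_cycle_labelling V E C Q \<or> forcing_inv V E C Q"
proof (induction rule: classC.induct)
  case (base a b c d)
  then show ?case by (simp add: four_cycle_labelling_def cyc_distinct_def cyc_verts_def cyc_edges_def)
next
  case (rot V E C v1 v2 v3 v4)
  then show ?case
    using four_cycle_labelling_rot[of V E C v1 v2 v3 v4] forcing_inv_rot[of V E C v1 v2 v3 v4] by blast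
next
  case (rev V E C v1 v2 v3 v4)
  then show ?case
    using four_cycle_labelling_rev[of V E C v1 v2 v3 v4] forcing_inv_rev[of V E C v1 v2 v3 v4] by blast
next
  case (step V E C v1 v2 v3 v4 x y z)
  from step.IH show ?case
    using forcing_inv_from_four_cycle[OF _ step.hyps(5-7,4)] forcing_inv_grow[OF _ step.hyps(2,5-7,4)]
    unfolding gadget_edges_def by blast
qed

lemma four_cycle_labelling_card: "four_cycle_labelling V E C Q \<Longrightarrow> card V = 4"
  by (cases C) (auto simp: four_cycle_labelling_def cyc_verts_def cyc_distinct_def)

lemma not_extends_if_forces:
  assumes "forces V E D D'" "D \<union> D' \<subseteq> VS" "\<not> monochromatic f D" "\<not> monochromatic f D'"
  shows "\<not> extends_to VS f V E"
proof
  assume "extends_to VS f V E"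
  then obtain g where g: "proper3 V E g" "\<forall>v\<in>VS. g v = f v" unfolding extends_to_def by blast
  have "monochromatic g D = monochromatic f D" "monochromatic g D' = monochromatic f D'"
    using monochromatic_cong[OF _ g(2)] assms(2) by auto
  then show False using g(1) assms(1,3,4) unfolding forces_def by blast
qed

lemma critical_if_essential_edges:
  assumes "is_subgraph VS ES V E" "\<forall>v\<in>V. \<exists>e\<in>E. v \<in> e"
    and "forces V E D D'" "D \<union> D' \<subseteq> VS" "essential_edges V E (E - ES) D D'"
  shows "critical V E VS ES"
  unfolding critical_def
proof (intro conjI allI impI)
  fix V'' E'' assume sub: "is_subgraph V'' E'' V E \<and> VS \<subseteq> V'' \<and> ES \<subseteq> E'' \<and> (V'', E'') \<noteq> (V, E)"
  have "\<not> E \<subseteq> E''"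
  proof
    assume "E \<subseteq> E''"
    then have "E'' = E" "V'' \<noteq> V" using sub unfolding is_subgraph_def by auto
    then obtain v where "v \<in> V" "v \<notin> V''" using sub unfolding is_subgraph_def by blast
    then show False using assms(2) \<open>E'' = E\<close> sub unfolding is_subgraph_def by blast
  qed
  then obtain e where e: "e \<in> E" "e \<notin> E''" by blast
  then have "e \<in> E - ES" using sub by blast
  then obtain g where g: "proper3 V (E - {e}) g" "\<not> monochromatic g D" "\<not> monochromatic g D'"
    using assms(5) unfolding essential_edges_def by blast
  have "VS \<subseteq> V" "ES \<subseteq> E - {e}" "V'' \<subseteq> V" "E'' \<subseteq> E - {e}"
    using assms(1) sub e(2) unfolding is_subgraph_def by auto
  then have "proper3 VS ES g" "proper3 V'' E'' g" using proper3_mono[OF _ _ g(1)] by blast+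
  then have "proper3 VS ES g" "extends_to VS g V'' E''" unfolding extends_to_def by blast+
  moreover have "\<not> extends_to VS g V E" by (rule not_extends_if_forces[OF assms(3,4) g(2,3)])
  ultimately show "\<exists>f. proper3 VS ES f \<and> extends_to VS f V'' E'' \<and> \<not> extends_to VS f V E"
    by blast
qed (use assms(1) in simp)

lemma not_monochromatic_deg2_verts:
  assumes "deg2_verts E q \<in> diagonals q" "cyc_distinct q"
    and "\<forall>u\<in>cyc_verts q. \<forall>v\<in>cyc_verts q. u \<noteq> v \<and> deg E u = 2 \<and> deg E v = 2 \<longrightarrow> f u \<noteq> f v"
  shows "\<not> monochromatic f (deg2_verts E q)"
proof -
  obtain p r where "deg2_verts E q = {p,r}" "p \<noteq> r" using diagonal_doubleton[OF assms(1,2)] by blast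
  then show ?thesis using assms(3) unfolding deg2_verts_def by auto
qed

lemma forcing_inv_critical:
  assumes "forcing_inv V E C Q"
  shows "critical V E (cyc_verts C \<union> cyc_verts Q) (cyc_edges C \<union> cyc_edges Q)"
proof -
  let ?VS = "cyc_verts C \<union> cyc_verts Q" and ?ES = "cyc_edges C \<union> cyc_edges Q"
  have sub: "\<forall>e\<in>E. e \<subseteq> V" and cov: "\<forall>v\<in>V. \<exists>e\<in>E. v \<in> e" and CE: "?ES \<subseteq> E"
    and forces: "forces V E (deg2_verts E C) (deg2_verts E Q)"
    and ess: "essential_edges V E (E - cyc_edges C) (deg2_verts E C) (deg2_verts E Q)"
    using assms unfolding forcing_inv_def by blast+
  have "is_subgraph ?VS ?ES V E"
    using CE cyc_verts_subset[OF _ sub, of C] cyc_verts_subset[OF _ sub, of Q]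
    unfolding is_subgraph_def by (auto dest: cyc_edge_subset)
  moreover have "deg2_verts E C \<union> deg2_verts E Q \<subseteq> ?VS" by (auto simp: deg2_verts_def)
  moreover have "essential_edges V E (E - ?ES) (deg2_verts E C) (deg2_verts E Q)"
    by (rule essential_edges_subset[OF ess]) blast
  ultimately show ?thesis using critical_if_essential_edges[OF _ cov forces] by blast
qed

lemma forcing_inv_not_extends:
  assumes "forcing_inv V E C Q"
    and "\<forall>Ci\<in>{C, Q}. \<forall>u\<in>cyc_verts Ci. \<forall>v\<in>cyc_verts Ci.
          u \<noteq> v \<and> deg E u = 2 \<and> deg E v = 2 \<longrightarrow> f u \<noteq> f v"
  shows "\<not> extends_to (cyc_verts C \<union> cyc_verts Q) f V E"
proof (rule not_extends_if_forces)
  have C: "deg2_verts E C \<in> diagonals C" "cyc_distinct C"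
    and Q: "deg2_verts E Q \<in> diagonals Q" "cyc_distinct Q"
    using assms(1) unfolding forcing_inv_def by blast+
  show "\<not> monochromatic f (deg2_verts E C)" "\<not> monochromatic f (deg2_verts E Q)"
    using assms(2) by (simp_all add: not_monochromatic_deg2_verts[OF C] not_monochromatic_deg2_verts[OF Q])
  show "forces V E (deg2_verts E C) (deg2_verts E Q)" using assms(1) unfolding forcing_inv_def by blast
  show "deg2_verts E C \<union> deg2_verts E Q \<subseteq> cyc_verts C \<union> cyc_verts Q" by (auto simp: deg2_verts_def)
qed

theorem mainTheorem7:
  fixes V :: "'a set" and E :: "'a set set" and C1 C2 :: "'a \<times> 'a \<times> 'a \<times> 'a"
  assumes "classC V E C1 C2"
    and "card V \<noteq> 4"
  shows "critical V E (cyc_verts C1 \<union> cyc_verts C2) (cyc_edges C1 \<union> cyc_edges C2)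
    \<and> (\<forall>f. proper3 (cyc_verts C1 \<union> cyc_verts C2) (cyc_edges C1 \<union> cyc_edges C2) f
          \<and> (\<forall>Ci\<in>{C1, C2}. \<forall>u\<in>cyc_verts Ci. \<forall>v\<in>cyc_verts Ci.
                u \<noteq> v \<and> deg E u = 2 \<and> deg E v = 2 \<longrightarrow> f u \<noteq> f v)
       \<longrightarrow> \<not> extends_to (cyc_verts C1 \<union> cyc_verts C2) f V E)"
proof -
  have I: "forcing_inv V E C1 C2"
    using classC_invariant[OF assms(1)] four_cycle_labelling_card assms(2) by blast
  show ?thesis
  proof (intro conjI allI impI)
    show "critical V E (cyc_verts C1 \<union> cyc_verts C2) (cyc_edges C1 \<union> cyc_edges C2)"
      by (rule forcing_inv_critical[OF I])
  next
    fix f assume "proper3 (cyc_verts C1 \<union> cyc_verts C2) (cyc_edges C1 \<union> cyc_edges C2) f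
      \<and> (\<forall>Ci\<in>{C1, C2}. \<forall>u\<in>cyc_verts Ci. \<forall>v\<in>cyc_verts Ci.
            u \<noteq> v \<and> deg E u = 2 \<and> deg E v = 2 \<longrightarrow> f u \<noteq> f v)"
    then show "\<not> extends_to (cyc_verts C1 \<union> cyc_verts C2) f V E"
      using forcing_inv_not_extends[OF I] by blast
  qed
qed

end
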